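(* Let $A_1,B_1,C_1,A_2,B_2,C_2$ be real matrices of dimensions $n_1\times n_1$, $n_1\times p_1$, $m\times n_1$, $n_2\times n_2$, $n_2\times p_2$, $m\times n_2$. Let $K\in\mathbb{R}^{p_1\times n_1}$ with $A_1+B_1K$ Hurwitz, $M$ symmetric positive definite and $\lambda>0$ with $M\ge C_1^TC_1$ and $(A_1+B_1K)^TM+M(A_1+B_1K)\le-2\lambda M$, and $P\in\mathbb{R}^{n_1\times n_2}$, $Q\in\mathbb{R}^{p_1\times n_2}$ with $PA_2=A_1P+B_1Q$, $C_2=C_1P$; let $R\in\mathbb{R}^{p_1\times p_2}$ be arbitrary. Define $\mathcal{V}(\mathbf{x}_1,\mathbf{x}_2)=\sqrt{(\mathbf{x}_1-P\mathbf{x}_2)^TM(\mathbf{x}_1-P\mathbf{x}_2)}$, $u_{\mathcal{V}}(\mathbf{u}_2,\mathbf{x}_1,\mathbf{x}_2)=R\mathbf{u}_2+Q\mathbf{x}_2+K(\mathbf{x}_1-P\mathbf{x}_2)$, and $\gamma(\nu)=\frac{\|\sqrt{M}(B_1R-PB_2)\|}{\lambda}\nu$. Let $\mathbf{u}_2(\cdot)$ be a smooth, bounded input with trajectory $\mathbf{x}_2(t)$ of $\dot{\mathbf{x}}_2=A_2\mathbf{x}_2+B_2\mathbf{u}_2$ and output $\mathbf{y}_2=C_2\mathbf{x}_2$. Let the disturbance be a single unit impulse $d(t)=\delta(t-t_i)$ at a time $t_i>0$, entering through an unknown vector $B_d\in\mathbb{R}^{n_1}$ with $\|B_d\|<b_{max}$,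 and let $\mathbf{x}_1(t)$ be a trajectory of $\dot{\mathbf{x}}_1=A_1\mathbf{x}_1+B_1u_{\mathcal{V}}(\mathbf{u}_2,\mathbf{x}_1,\mathbf{x}_2)+B_d d$, i.e. $\mathbf{x}_1$ solves this ODE with $d=0$ on $[0,t_i)$ and on $(t_i,\infty)$ and jumps as $\mathbf{x}_1(t_i^+)=\mathbf{x}_1(t_i^-)+B_d$; let $\mathbf{y}_1=C_1\mathbf{x}_1$. Then for all $t\ge0$ (at $t=t_i$ for both one-sided limits), $$\|\mathbf{y}_1(t)-\mathbf{y}_2(t)\|\le\max\big\{\mathcal{V}(\mathbf{x}_1(0),\mathbf{x}_2(0)),\ \gamma(\|\mathbf{u}_2\|_\infty)\big\}+b_{max}\sqrt{\lambda_{max}},$$ where $\lambda_{max}$ is the largest eigenvalue of $M$.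
   Context: Vector norms are Euclidean; for a matrix $A$, $\|A\|$ is the induced 2-norm; $\sqrt{M}$ is the symmetric positive definite square root of $M$; $\le$ between symmetric matrices is the Loewner order; $\|\mathbf{u}_2\|_\infty=\sup_{t\ge0}\|\mathbf{u}_2(t)\|$; $\delta$ is the Dirac delta. *)

theory Defs
  imports "HOL-Analysis.Analysis"
begin

text \<open>Conventions: a p x q real matrix is of type real^'q^'p (rows indexed by 'p).
 Vector norms are Euclidean (the norm on real^'n).\<close>

definition sym_mat :: "real^'n^'n \<Rightarrow> bool" where
  "sym_mat M \<longleftrightarrow> transpose M = M"

definition pos_def :: "real^'n^'n \<Rightarrow> bool" where
  "pos_def M \<longleftrightarrow> sym_mat M \<and> (\<forall>x. x \<noteq> 0 \<longrightarrow> x \<bullet> (M *v x) > 0)"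

definition loewner_le :: "real^'n^'n \<Rightarrow> real^'n^'n \<Rightarrow> bool" where
  "loewner_le N M \<longleftrightarrow> (\<forall>x. x \<bullet> (N *v x) \<le> x \<bullet> (M *v x))"

definition hurwitz :: "real^'n^'n \<Rightarrow> bool" where
  "hurwitz A \<longleftrightarrow>
     (\<forall>z::complex. det (mat z - (\<chi> i j. complex_of_real (A $ i $ j))) = 0 \<longrightarrow> Re z < 0)"

definition mat_norm :: "real^'n^'m \<Rightarrow> real" where
  "mat_norm A = onorm (\<lambda>x. A *v x)"

definition mat_sqrt :: "real^'n^'n \<Rightarrow> real^'n^'n" where
  "mat_sqrt M = (THE S. pos_def S \<and> S ** S = M)"

definition max_eig :: "real^'n^'n \<Rightarrow> real" where
  "max_eig M = Max {l. \<exists>v. v \<noteq> 0 \<and> M *v v = l *\<^sub>R v}"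

definition smooth_nonneg :: "(real \<Rightarrow> 'a::real_normed_vector) \<Rightarrow> bool" where
  "smooth_nonneg u \<longleftrightarrow> (\<exists>D :: nat \<Rightarrow> real \<Rightarrow> 'a. D 0 = u \<and>
     (\<forall>k t. t \<ge> 0 \<longrightarrow> (D k has_vector_derivative D (Suc k) t) (at t within {0..})))"

definition sup_norm :: "(real \<Rightarrow> 'a::real_normed_vector) \<Rightarrow> real" where
  "sup_norm u = (SUP t\<in>{0..}. norm (u t))"

end

theory Submission
  imports Defs
begin

(* The tracking error e = x1 - P x2 obeys e' = (A1 + B1 K) e + (B1 R - P B2) u2 away from the
   impulse (the relation P A2 = A1 P + B1 Q cancels all x2-terms) and jumps by Bd at ti.
   Its M-norm |sqrt M e| is a Lyapunov function: by the Lyapunov inequality and Cauchy-Schwarz,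
   d/dt |sqrt M e|^2 <= 2 lam |sqrt M e| (gamma(|u2|) - |sqrt M e|), so |sqrt M e| can only decrease
   while it exceeds gamma(|u2|_inf). Hence it stays below max(V(x1 0, x2 0), gamma) up to ti, the
   jump adds at most |sqrt M Bd| <= bmax sqrt(lambda_max), and the same argument applies after ti.
   Finally C1^T C1 <= M and C2 = C1 P give |y1 - y2| = |C1 e| <= |sqrt M e|.
   The square root and the bound by lambda_max come from the spectral theorem for symmetric
   matrices, obtained by maximising the Rayleigh quotient. *)

section \<open>Spectral theorem for symmetric matrices\<close>

lemma sym_mat_inner_commute:
  "sym_mat M \<Longrightarrow> (M *v x) \<bullet> y = x \<bullet> (M *v y)"
  by (metis dot_lmul_matrix sym_mat_def transpose_matrix_vector)

lemma sym_matI_inner: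
  fixes S :: "real^'n^'n"
  assumes "\<And>x y. (S *v x) \<bullet> y = x \<bullet> (S *v y)"
  shows "sym_mat S"
proof -
  have "transpose S *v x = S *v x" for x
  proof -
    define d where "d = transpose S *v x - S *v x"
    have "(transpose S *v x) \<bullet> d = (S *v x) \<bullet> d"
      by (simp add: dot_lmul_matrix assms)
    then have "d \<bullet> d = 0" by (simp add: d_def inner_diff_left)
    then show ?thesis by (simp add: d_def)
  qed
  then show ?thesis by (simp add: sym_mat_def matrix_eq)
qed

lemma nonneg_eq_0_if_quadratic_bound:
  fixes a c :: real
  assumes "a \<ge> 0" and "\<And>t. t\<^sup>2 * c \<le> 2 * t * a"
  shows "a = 0"
proof (rule ccontr)
  assume "a \<noteq> 0"
  with assms(1) have a: "a > 0" by simp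
  define s where "s = a / (\<bar>c\<bar> + 1)"
  have s: "s > 0" using a by (simp add: s_def)
  have "s * (s * c) \<le> s * (-2 * a)"
    using assms(2)[of "-s"] by (simp add: power2_eq_square algebra_simps)
  then have "s * c \<le> -2 * a" using s by (simp only: mult_le_cancel_left_pos)
  moreover have "- (s * \<bar>c\<bar>) \<le> s * c"
    using s mult_left_mono[OF abs_ge_minus_self[of c], of s] by simp
  moreover have "s * \<bar>c\<bar> < a" using a by (simp add: s_def field_simps)
  ultimately show False using a by linarith
qed

lemma rayleigh_quotient_attains_max:
  fixes M :: "real^'n^'n"
  assumes U: "subspace U" and ne: "U \<noteq> {0}"
  obtains v where "v \<in> U" "norm v = 1" "\<And>y. y \<in> U \<Longrightarrow> y \<bullet> (M *v y) \<le> (v \<bullet> (M *v v)) * (y \<bullet> y)"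
proof -
  define S where "S = U \<inter> sphere 0 1"
  have compact: "compact S"
    unfolding S_def using compact_Int_closed[OF compact_sphere closed_subspace[OF U]]
    by (simp add: Int_commute)
  have nonempty: "S \<noteq> {}"
  proof -
    obtain x where "x \<in> U" "x \<noteq> 0" using ne U subspace_0 by blast
    then have "(1 / norm x) *\<^sub>R x \<in> S" using U by (simp add: S_def subspace_scale)
    then show ?thesis by blast
  qed
  have "continuous_on S (\<lambda>x. x \<bullet> (M *v x))"
    by (intro continuous_intros linear_continuous_on matrix_vector_mul_linear)
  then obtain v where v: "v \<in> S" and vmax: "\<And>y. y \<in> S \<Longrightarrow> y \<bullet> (M *v y) \<le> v \<bullet> (M *v v)"
    using continuous_attains_sup[OF compact nonempty] by blast
  have "y \<bullet> (M *v y) \<le> (v \<bullet> (M *v v)) * (y \<bullet> y)" if y: "y \<in> U" for y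
  proof (cases "y = 0")
    case False
    have "(1 / norm y) *\<^sub>R y \<in> S" using y U False by (simp add: S_def subspace_scale)
    from vmax[OF this] have "(1 / norm y)\<^sup>2 * (y \<bullet> (M *v y)) \<le> v \<bullet> (M *v v)"
      by (simp add: matrix_vector_mult_scaleR power2_eq_square mult.assoc)
    moreover have "y \<bullet> y = (norm y)\<^sup>2" by (simp add: power2_norm_eq_inner)
    ultimately show ?thesis using False by (simp add: field_simps)
  qed simp
  moreover have "v \<in> U" "norm v = 1" using v by (simp_all add: S_def)
  ultimately show ?thesis using that by blast
qed

lemma rayleigh_quotient_max_eigenvector:
  fixes M :: "real^'n^'n"
  assumes sym: "sym_mat M" and U: "subspace U" and inv: "\<And>x. x \<in> U \<Longrightarrow> M *v x \<in> U"
    and vU: "v \<in> U" and vv: "v \<bullet> v = 1"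
    and max: "\<And>y. y \<in> U \<Longrightarrow> y \<bullet> (M *v y) \<le> (v \<bullet> (M *v v)) * (y \<bullet> y)"
  shows "M *v v = (v \<bullet> (M *v v)) *\<^sub>R v"
proof -
  define l where "l = v \<bullet> (M *v v)"
  define w where "w = l *\<^sub>R v - M *v v"
  have wU: "w \<in> U" unfolding w_def using U vU inv by (simp add: subspace_diff subspace_scale)
  \<comment> \<open>maximality of the Rayleigh quotient at \<open>v\<close> along the line \<open>v + t w\<close> forces \<open>w = 0\<close>\<close>
  have "t\<^sup>2 * (w \<bullet> (M *v w) - l * (w \<bullet> w)) \<le> 2 * t * (w \<bullet> w)" for t
  proof -
    have "v + t *\<^sub>R w \<in> U" using U vU wU by (simp add: subspace_add subspace_scale)
    from max[OF this] have le:
      "(v + t *\<^sub>R w) \<bullet> (M *v (v + t *\<^sub>R w)) \<le> l * ((v + t *\<^sub>R w) \<bullet> (v + t *\<^sub>R w))"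
      by (simp add: l_def)
    have quad: "(v + t *\<^sub>R w) \<bullet> (M *v (v + t *\<^sub>R w))
        = l + 2 * t * (w \<bullet> (M *v v)) + t\<^sup>2 * (w \<bullet> (M *v w))"
    proof -
      have "v \<bullet> (M *v w) = w \<bullet> (M *v v)"
        using sym_mat_inner_commute[OF sym, of v w] by (simp add: inner_commute)
      then show ?thesis
        by (simp add: matrix_vector_right_distrib matrix_vector_mult_scaleR inner_add_left
            inner_add_right l_def power2_eq_square algebra_simps)
    qed
    have sq: "(v + t *\<^sub>R w) \<bullet> (v + t *\<^sub>R w) = 1 + 2 * t * (v \<bullet> w) + t\<^sup>2 * (w \<bullet> w)"
      using vv by (simp add: inner_add_left inner_add_right power2_eq_square algebra_simps inner_commute)
    have cross: "w \<bullet> (M *v v) = l * (v \<bullet> w) - w \<bullet> w"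
      by (simp add: w_def inner_diff_left inner_diff_right algebra_simps inner_commute)
    have "\<And>A B p q r s :: real. A \<le> l * B \<Longrightarrow> A = l + 2 * t * p + t\<^sup>2 * q
        \<Longrightarrow> B = 1 + 2 * t * r + t\<^sup>2 * s \<Longrightarrow> p = l * r - s \<Longrightarrow> t\<^sup>2 * (q - l * s) \<le> 2 * t * s"
      by (simp add: algebra_simps)
    from this[OF le quad sq cross] show ?thesis .
  qed
  then have "w \<bullet> w = 0" by (rule nonneg_eq_0_if_quadratic_bound[rotated]) simp
  then show ?thesis by (simp add: w_def l_def)
qed

lemma sym_mat_unit_eigenvector_in_invariant_subspace:
  fixes M :: "real^'n^'n"
  assumes sym: "sym_mat M" and U: "subspace U" and inv: "\<And>x. x \<in> U \<Longrightarrow> M *v x \<in> U"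
    and ne: "U \<noteq> {0}"
  obtains v l where "v \<in> U" "norm v = 1" "M *v v = l *\<^sub>R v"
proof -
  obtain v where v: "v \<in> U" "norm v = 1"
    and max: "\<And>y. y \<in> U \<Longrightarrow> y \<bullet> (M *v y) \<le> (v \<bullet> (M *v v)) * (y \<bullet> y)"
    using rayleigh_quotient_attains_max[OF U ne] by blast
  have "v \<bullet> v = 1" using v(2) by (simp add: norm_eq_1)
  with rayleigh_quotient_max_eigenvector[OF sym U inv v(1) _ max] v that show ?thesis by blast
qed

lemma span_insert_orthogonal_complement:
  assumes U: "subspace U" and vU: "v \<in> U" and vv: "v \<bullet> v = 1"
    and B: "span B = {x \<in> U. v \<bullet> x = 0}"
  shows "span (insert v B) = U"
proof
  have "B \<subseteq> U" using B span_superset[of B] by blast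
  then show "span (insert v B) \<subseteq> U"
    using U vU by (simp add: span_minimal)
  show "U \<subseteq> span (insert v B)"
  proof
    fix x assume x: "x \<in> U"
    have "x - (v \<bullet> x) *\<^sub>R v \<in> span B"
      using x vU vv U by (simp add: B subspace_diff subspace_scale inner_diff_right)
    then have "x - (v \<bullet> x) *\<^sub>R v \<in> span (insert v B)"
      using span_mono[of B "insert v B"] by auto
    moreover have "(v \<bullet> x) *\<^sub>R v \<in> span (insert v B)"
      by (simp add: span_base span_scale)
    ultimately have "x - (v \<bullet> x) *\<^sub>R v + (v \<bullet> x) *\<^sub>R v \<in> span (insert v B)"
      by (rule span_add)
    then show "x \<in> span (insert v B)" by simp
  qed
qed

definition orthonormal_basis :: "(real^'n) set \<Rightarrow> bool" where
  "orthonormal_basis B \<longleftrightarrow> pairwise orthogonal B \<and> (\<forall>b\<in>B. norm b = 1) \<and> span B = UNIV"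

definition orthonormal_eigenbasis :: "real^'n^'n \<Rightarrow> (real^'n) set \<Rightarrow> (real^'n \<Rightarrow> real) \<Rightarrow> bool" where
  "orthonormal_eigenbasis M B \<mu> \<longleftrightarrow> orthonormal_basis B \<and> (\<forall>b\<in>B. M *v b = \<mu> b *\<^sub>R b)"

lemma sym_mat_orthonormal_eigenbasis_of_invariant_subspace:
  fixes M :: "real^'n^'n"
  assumes sym: "sym_mat M"
  shows "subspace U \<Longrightarrow> (\<forall>x\<in>U. M *v x \<in> U) \<Longrightarrow> \<exists>B. B \<subseteq> U \<and> pairwise orthogonal B \<and>
     (\<forall>b\<in>B. norm b = 1) \<and> (\<forall>b\<in>B. \<exists>l. M *v b = l *\<^sub>R b) \<and> span B = U"
proof (induction "dim U" arbitrary: U rule: less_induct)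
  case less
  show ?case
  proof (cases "U = {0}")
    case True
    then show ?thesis by (intro exI[of _ "{}"]) auto
  next
    case False
    obtain v l where vU: "v \<in> U" and nv: "norm v = 1" and Mv: "M *v v = l *\<^sub>R v"
      using sym_mat_unit_eigenvector_in_invariant_subspace[OF sym less.prems(1) _ False] less.prems(2)
      by blast
    have vv: "v \<bullet> v = 1" using nv by (simp add: norm_eq_1)
    define U' where "U' = {x\<in>U. v \<bullet> x = 0}"
    have sU': "subspace U'"
      using less.prems(1) unfolding U'_def subspace_def by (auto simp: inner_add_right)
    have invU': "\<forall>x\<in>U'. M *v x \<in> U'"
    proof
      fix x assume x: "x \<in> U'"
      have "v \<bullet> (M *v x) = (M *v v) \<bullet> x" using sym_mat_inner_commute[OF sym, of v x] by simp
      also have "\<dots> = 0" using x by (simp add: Mv U'_def)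
      finally show "M *v x \<in> U'" using x less.prems(2) by (simp add: U'_def)
    qed
    have "v \<notin> U'" using vv by (simp add: U'_def)
    moreover have "U' \<subseteq> U" by (auto simp: U'_def)
    ultimately have "U' \<subset> U" using vU by blast
    then have "dim U' < dim U"
      using sU' less.prems(1) by (metis dim_psubset span_eq_iff)
    from less.hyps[OF this sU' invU'] obtain B' where B': "B' \<subseteq> U'" "pairwise orthogonal B'"
      "\<forall>b\<in>B'. norm b = 1" "\<forall>b\<in>B'. \<exists>l. M *v b = l *\<^sub>R b" "span B' = U'" by blast
    show ?thesis
    proof (intro exI[of _ "insert v B'"] conjI)
      show "insert v B' \<subseteq> U" using vU B'(1) by (auto simp: U'_def)
      show "pairwise orthogonal (insert v B')"
        using B'(1,2) by (auto simp: pairwise_insert orthogonal_def U'_def inner_commute)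
      show "\<forall>b\<in>insert v B'. norm b = 1" using nv B'(3) by auto
      show "\<forall>b\<in>insert v B'. \<exists>l. M *v b = l *\<^sub>R b" using Mv B'(4) by auto
      show "span (insert v B') = U"
        using span_insert_orthogonal_complement[OF less.prems(1) vU vv B'(5)[unfolded U'_def]] .
    qed
  qed
qed

lemma sym_mat_orthonormal_eigenbasis:
  fixes M :: "real^'n^'n"
  assumes "sym_mat M"
  obtains B \<mu> where "orthonormal_eigenbasis M B \<mu>"
proof -
  obtain B where B: "pairwise orthogonal B" "\<forall>b\<in>B. norm b = 1" "\<forall>b\<in>B. \<exists>l. M *v b = l *\<^sub>R b"
    "span B = UNIV"
    using sym_mat_orthonormal_eigenbasis_of_invariant_subspace[OF assms, of UNIV] by auto
  from B(3) obtain \<mu> where "\<forall>b\<in>B. M *v b = \<mu> b *\<^sub>R b" by metis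
  with B that show ?thesis by (simp add: orthonormal_eigenbasis_def orthonormal_basis_def)
qed

lemma orthonormal_basis_finite: "orthonormal_basis B \<Longrightarrow> finite B"
  by (simp add: orthonormal_basis_def pairwise_orthogonal_imp_finite)

lemma orthonormal_basis_nonzero: "orthonormal_basis B \<Longrightarrow> b \<in> B \<Longrightarrow> b \<noteq> 0"
  by (force simp: orthonormal_basis_def)

lemma orthonormal_basis_inner:
  assumes "orthonormal_basis B" "b \<in> B" "b' \<in> B"
  shows "b \<bullet> b' = (if b = b' then 1 else 0)"
  using assms by (auto simp: orthonormal_basis_def pairwise_def orthogonal_def norm_eq_1)

lemma orthonormal_basis_expansion:
  assumes "orthonormal_basis B"
  shows "x = (\<Sum>b\<in>B. (x \<bullet> b) *\<^sub>R b)"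
  using assms orthonormal_basis_finite[OF assms]
  by (simp add: orthonormal_basis_def orthonormal_basis_expand)

lemma orthonormal_basis_nonzero_coeff:
  assumes "orthonormal_basis B" "x \<noteq> 0"
  obtains b where "b \<in> B" "x \<bullet> b \<noteq> 0"
proof -
  have "\<not> (\<forall>b\<in>B. x \<bullet> b = 0)"
    using orthonormal_basis_expansion[OF assms(1), of x] assms(2) by force
  with that show ?thesis by blast
qed

lemma orthonormal_basis_matrix_eq:
  fixes A C :: "real^'n^'n"
  assumes "orthonormal_basis B" "\<And>b. b \<in> B \<Longrightarrow> A *v b = C *v b"
  shows "A = C"
proof -
  have "A *v x = C *v x" for x
    using real_vector.linear_eq_on_span[OF matrix_vector_mul_linear matrix_vector_mul_linear, of B A C x]
      assms by (auto simp: orthonormal_basis_def)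
  then show ?thesis by (simp add: matrix_eq)
qed

lemma orthonormal_eigenbasis_mult:
  assumes "orthonormal_eigenbasis M B \<mu>"
  shows "M *v x = (\<Sum>b\<in>B. (\<mu> b * (x \<bullet> b)) *\<^sub>R b)"
proof -
  have "M *v x = (\<Sum>b\<in>B. (x \<bullet> b) *\<^sub>R (M *v b))"
    using assms by (subst orthonormal_basis_expansion[of B x])
      (simp_all add: orthonormal_eigenbasis_def vec.sum matrix_vector_mult_scaleR)
  then show ?thesis using assms by (simp add: orthonormal_eigenbasis_def mult.commute)
qed

lemma orthonormal_eigenbasis_bilinear_form:
  assumes "orthonormal_eigenbasis M B \<mu>"
  shows "x \<bullet> (M *v y) = (\<Sum>b\<in>B. \<mu> b * (x \<bullet> b) * (y \<bullet> b))"
  by (simp add: orthonormal_eigenbasis_mult[OF assms] inner_sum_right algebra_simps)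

lemma orthonormal_eigenbasis_sym_mat:
  assumes "orthonormal_eigenbasis M B \<mu>"
  shows "sym_mat M"
proof (rule sym_matI_inner)
  fix x y
  show "(M *v x) \<bullet> y = x \<bullet> (M *v y)"
    by (simp add: inner_commute[of "M *v x"] orthonormal_eigenbasis_bilinear_form[OF assms] algebra_simps)
qed

lemma orthonormal_eigenbasis_quadratic_form:
  assumes "orthonormal_eigenbasis M B \<mu>"
  shows "x \<bullet> (M *v x) = (\<Sum>b\<in>B. \<mu> b * (x \<bullet> b)\<^sup>2)"
  by (simp add: orthonormal_eigenbasis_bilinear_form[OF assms] power2_eq_square mult.assoc)

section \<open>Square root and largest eigenvalue of a positive definite matrix\<close>

lemma pos_def_eigenvalue_pos:
  assumes "pos_def M" "M *v b = \<mu> *\<^sub>R b" "b \<noteq> 0"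
  shows "\<mu> > 0"
proof -
  have "0 < b \<bullet> (M *v b)" using assms(1,3) by (simp add: pos_def_def)
  also have "\<dots> = \<mu> * (b \<bullet> b)" using assms(2) by simp
  finally have "0 < \<mu> * (b \<bullet> b)" .
  moreover have "0 < b \<bullet> b" using assms(3) by simp
  ultimately show ?thesis by (simp add: zero_less_mult_iff)
qed

lemma orthonormal_eigenbasis_pos_def:
  assumes eb: "orthonormal_eigenbasis M B \<mu>" and pos: "\<And>b. b \<in> B \<Longrightarrow> \<mu> b > 0"
  shows "pos_def M"
  unfolding pos_def_def
proof (intro conjI allI impI)
  show "sym_mat M" using eb by (rule orthonormal_eigenbasis_sym_mat)
  fix x :: "real^'a" assume "x \<noteq> 0"
  then obtain b where b: "b \<in> B" "x \<bullet> b \<noteq> 0"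
    using eb orthonormal_basis_nonzero_coeff by (auto simp: orthonormal_eigenbasis_def)
  have fin: "finite B" using eb by (simp add: orthonormal_eigenbasis_def orthonormal_basis_finite)
  have "0 < \<mu> b * (x \<bullet> b)\<^sup>2" using pos[OF b(1)] b(2) by simp
  also have "\<dots> \<le> (\<Sum>b\<in>B. \<mu> b * (x \<bullet> b)\<^sup>2)"
    using fin b(1) pos by (intro member_le_sum) (auto intro!: mult_nonneg_nonneg simp: less_imp_le)
  finally show "0 < x \<bullet> (M *v x)" by (simp add: orthonormal_eigenbasis_quadratic_form[OF eb])
qed

lemma ex_matrix_orthonormal_eigenbasis:
  assumes "orthonormal_basis B"
  obtains S where "orthonormal_eigenbasis S B \<nu>"
proof
  define f where "f x = (\<Sum>b\<in>B. (\<nu> b * (x \<bullet> b)) *\<^sub>R b)" for x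
  have "linear f"
    by (rule linearI) (simp_all add: f_def inner_add_left algebra_simps sum.distrib scaleR_sum_right)
  have "matrix f *v b = \<nu> b *\<^sub>R b" if "b \<in> B" for b
  proof -
    have "matrix f *v b = f b" using \<open>linear f\<close> by (simp add: matrix_works)
    also have "\<dots> = (\<Sum>b'\<in>B. if b' = b then \<nu> b *\<^sub>R b else 0)"
      unfolding f_def by (rule sum.cong) (use that in \<open>auto simp: orthonormal_basis_inner[OF assms]\<close>)
    also have "\<dots> = \<nu> b *\<^sub>R b" using that orthonormal_basis_finite[OF assms] by simp
    finally show ?thesis .
  qed
  then show "orthonormal_eigenbasis (matrix f) B \<nu>"
    using assms by (simp add: orthonormal_eigenbasis_def)
qed

lemma pos_def_square_root_on_eigenvector:
  assumes T: "pos_def T" and eig: "(T ** T) *v b = \<mu> *\<^sub>R b" and "\<mu> \<ge> 0"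
  shows "T *v b = sqrt \<mu> *\<^sub>R b"
proof -
  define c where "c = sqrt \<mu>"
  have c: "c \<ge> 0" "c * c = \<mu>" using \<open>\<mu> \<ge> 0\<close> by (simp_all add: c_def)
  define w where "w = T *v b - c *\<^sub>R b"
  \<comment> \<open>\<open>w\<close> is an eigenvector of \<open>T\<close> for the eigenvalue \<open>-c \<le> 0\<close>, so it must vanish\<close>
  have "T *v w = - c *\<^sub>R w"
    using eig c(2) by (simp add: w_def matrix_vector_mult_diff_distrib matrix_vector_mult_scaleR
        matrix_vector_mul_assoc algebra_simps)
  then have "w \<bullet> (T *v w) \<le> 0" using c(1) by simp
  then have "w = 0" using T by (auto simp: pos_def_def)
  then show ?thesis by (simp add: w_def c_def)
qed

lemma pos_def_mat_sqrt:
  fixes M :: "real^'n^'n"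
  assumes M: "pos_def M"
  shows "pos_def (mat_sqrt M)" and "mat_sqrt M ** mat_sqrt M = M"
proof -
  obtain B \<mu> where eb: "orthonormal_eigenbasis M B \<mu>"
    using M sym_mat_orthonormal_eigenbasis by (auto simp: pos_def_def)
  have B: "orthonormal_basis B" and Mb: "\<And>b. b \<in> B \<Longrightarrow> M *v b = \<mu> b *\<^sub>R b"
    using eb by (auto simp: orthonormal_eigenbasis_def)
  have \<mu>_pos: "\<mu> b > 0" if "b \<in> B" for b
    using pos_def_eigenvalue_pos[OF M Mb[OF that] orthonormal_basis_nonzero[OF B that]] .
  obtain S where S: "orthonormal_eigenbasis S B (\<lambda>b. sqrt (\<mu> b))"
    using ex_matrix_orthonormal_eigenbasis[OF B] .
  have Sb: "S *v b = sqrt (\<mu> b) *\<^sub>R b" if "b \<in> B" for b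
    using S that by (simp add: orthonormal_eigenbasis_def)
  have "pos_def S" using S \<mu>_pos by (intro orthonormal_eigenbasis_pos_def) auto
  moreover have "S ** S = M"
  proof (rule orthonormal_basis_matrix_eq[OF B])
    fix b assume b: "b \<in> B"
    show "(S ** S) *v b = M *v b"
      using \<mu>_pos[OF b] by (simp add: b Sb Mb matrix_vector_mul_assoc[symmetric] matrix_vector_mult_scaleR)
  qed
  moreover have "T = S" if T: "pos_def T" "T ** T = M" for T
  proof (rule orthonormal_basis_matrix_eq[OF B])
    fix b assume b: "b \<in> B"
    show "T *v b = S *v b"
      using pos_def_square_root_on_eigenvector[OF T(1), of b "\<mu> b"] T(2) Mb[OF b] \<mu>_pos[OF b]
      by (simp add: Sb[OF b])
  qed
  ultimately have "mat_sqrt M = S"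
    unfolding mat_sqrt_def by (intro the_equality) blast+
  with \<open>pos_def S\<close> \<open>S ** S = M\<close> show "pos_def (mat_sqrt M)" and "mat_sqrt M ** mat_sqrt M = M"
    by simp_all
qed

lemma inner_mat_sqrt:
  assumes "pos_def M"
  shows "(mat_sqrt M *v x) \<bullet> (mat_sqrt M *v y) = x \<bullet> (M *v y)"
proof -
  have "(mat_sqrt M *v x) \<bullet> (mat_sqrt M *v y) = x \<bullet> (mat_sqrt M *v (mat_sqrt M *v y))"
    using pos_def_mat_sqrt(1)[OF assms] by (simp add: pos_def_def sym_mat_inner_commute)
  also have "\<dots> = x \<bullet> (M *v y)" by (simp add: matrix_vector_mul_assoc pos_def_mat_sqrt(2)[OF assms])
  finally show ?thesis .
qed

lemma quadratic_form_mat_sqrt: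
  assumes "pos_def M"
  shows "x \<bullet> (M *v x) = (norm (mat_sqrt M *v x))\<^sup>2"
  by (simp add: power2_norm_eq_inner inner_mat_sqrt[OF assms])

lemma norm_mat_sqrt:
  assumes "pos_def M"
  shows "norm (mat_sqrt M *v x) = sqrt (x \<bullet> (M *v x))"
  by (simp add: quadratic_form_mat_sqrt[OF assms])

lemma orthonormal_eigenbasis_eigenvalue:
  assumes eb: "orthonormal_eigenbasis M B \<mu>" and "v \<noteq> 0" and v: "M *v v = l *\<^sub>R v"
  shows "l \<in> \<mu> ` B"
proof -
  obtain b where b: "b \<in> B" "v \<bullet> b \<noteq> 0"
    using eb \<open>v \<noteq> 0\<close> orthonormal_basis_nonzero_coeff by (auto simp: orthonormal_eigenbasis_def)
  have "l * (v \<bullet> b) = (M *v v) \<bullet> b" using v by simp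
  also have "\<dots> = v \<bullet> (M *v b)" using orthonormal_eigenbasis_sym_mat[OF eb] by (rule sym_mat_inner_commute)
  also have "\<dots> = \<mu> b * (v \<bullet> b)" using eb b(1) by (simp add: orthonormal_eigenbasis_def)
  finally show ?thesis using b by auto
qed

lemma orthonormal_eigenbasis_le_max_eig:
  assumes eb: "orthonormal_eigenbasis M B \<mu>" and "b \<in> B"
  shows "\<mu> b \<le> max_eig M"
proof -
  have "{l. \<exists>v. v \<noteq> 0 \<and> M *v v = l *\<^sub>R v} \<subseteq> \<mu> ` B"
    using orthonormal_eigenbasis_eigenvalue[OF eb] by blast
  moreover have B: "orthonormal_basis B" using eb by (simp add: orthonormal_eigenbasis_def)
  ultimately have "finite {l. \<exists>v. v \<noteq> 0 \<and> M *v v = l *\<^sub>R v}"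
    using finite_imageI[OF orthonormal_basis_finite] finite_subset by blast
  moreover have "b \<noteq> 0" "M *v b = \<mu> b *\<^sub>R b"
    using eb \<open>b \<in> B\<close> orthonormal_basis_nonzero[OF B] by (auto simp: orthonormal_eigenbasis_def)
  ultimately show ?thesis unfolding max_eig_def by (intro Max_ge) auto
qed

lemma quadratic_form_le_max_eig:
  fixes M :: "real^'n^'n"
  assumes "sym_mat M"
  shows "x \<bullet> (M *v x) \<le> max_eig M * (x \<bullet> x)"
proof -
  obtain B \<mu> where eb: "orthonormal_eigenbasis M B \<mu>"
    using assms sym_mat_orthonormal_eigenbasis by blast
  then have B: "orthonormal_basis B" by (simp add: orthonormal_eigenbasis_def)
  have "x \<bullet> (M *v x) = (\<Sum>b\<in>B. \<mu> b * (x \<bullet> b)\<^sup>2)"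
    by (rule orthonormal_eigenbasis_quadratic_form[OF eb])
  also have "\<dots> \<le> (\<Sum>b\<in>B. max_eig M * (x \<bullet> b)\<^sup>2)"
    by (intro sum_mono mult_right_mono orthonormal_eigenbasis_le_max_eig[OF eb]) auto
  also have "\<dots> = max_eig M * (x \<bullet> x)"
    using orthonormal_eigenbasis_quadratic_form[of "mat 1" B "\<lambda>_. 1" x] B
    by (simp add: orthonormal_eigenbasis_def sum_distrib_left)
  finally show ?thesis .
qed

lemma max_eig_pos:
  fixes M :: "real^'n^'n"
  assumes "pos_def M"
  shows "max_eig M > 0"
proof -
  define x :: "real^'n" where "x = axis undefined 1"
  have "x \<noteq> 0" by (simp add: x_def axis_eq_0_iff)
  then have "0 < x \<bullet> (M *v x)" using assms by (simp add: pos_def_def)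
  also have "\<dots> \<le> max_eig M * (x \<bullet> x)"
    using assms by (intro quadratic_form_le_max_eig) (simp add: pos_def_def)
  finally show ?thesis using inner_ge_zero[of x] by (auto simp: zero_less_mult_iff)
qed

lemma norm_mat_sqrt_le:
  assumes "pos_def M"
  shows "norm (mat_sqrt M *v x) \<le> sqrt (max_eig M) * norm x"
proof -
  have "x \<bullet> (M *v x) \<le> max_eig M * (norm x)\<^sup>2"
    using assms by (simp add: pos_def_def quadratic_form_le_max_eig power2_norm_eq_inner)
  then have "sqrt (x \<bullet> (M *v x)) \<le> sqrt (max_eig M * (norm x)\<^sup>2)" by simp
  then show ?thesis by (simp add: norm_mat_sqrt[OF assms] real_sqrt_mult)
qed

section \<open>Quadratic Lyapunov functions\<close>

lemma le_if_deriv_nonpos_above: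
  fixes W W' :: "real \<Rightarrow> real"
  assumes ab: "a \<le> b" and cont: "continuous_on {a..b} W"
    and der: "\<And>t. a < t \<Longrightarrow> t < b \<Longrightarrow> (W has_real_derivative W' t) (at t)"
    and neg: "\<And>t. a < t \<Longrightarrow> t < b \<Longrightarrow> W t > m \<Longrightarrow> W' t \<le> 0"
    and Wa: "W a \<le> m"
  shows "W b \<le> m"
proof (rule ccontr)
  assume nb: "\<not> W b \<le> m"
  \<comment> \<open>after the last time \<open>t0\<close> with \<open>W t0 \<le> m\<close>, \<open>W\<close> is non-increasing by the mean value theorem\<close>
  define T where "T = {a..b} \<inter> W -` {..m}"
  have cT: "closed T" unfolding T_def by (rule continuous_closed_preimage[OF cont]) auto
  have aT: "a \<in> T" using ab Wa by (simp add: T_def)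
  have bdd: "bdd_above T" by (rule bdd_aboveI[of _ b]) (auto simp: T_def)
  define t0 where "t0 = Sup T"
  have t0T: "t0 \<in> T" unfolding t0_def using closed_contains_Sup[OF _ bdd cT] aT by blast
  have t0b: "t0 < b" using t0T nb by (auto simp: T_def less_le)
  have at0: "a \<le> t0" using t0T by (auto simp: T_def)
  have above: "W t > m" if "t0 < t" "t \<le> b" for t
  proof (rule ccontr)
    assume "\<not> W t > m"
    then have "t \<in> T" using that at0 by (auto simp: T_def)
    then have "t \<le> t0" unfolding t0_def using bdd by (rule cSup_upper)
    then show False using that by simp
  qed
  have cont2: "continuous_on {t0..b} W" by (rule continuous_on_subset[OF cont]) (use at0 in auto)
  have "W differentiable at x" if "t0 < x" "x < b" for x
    using der[of x] that at0 unfolding real_differentiable_def by auto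
  then obtain l z where z: "t0 < z" "z < b" "(W has_real_derivative l) (at z)" "W b - W t0 = (b - t0) * l"
    using MVT[OF t0b cont2] by blast
  have "l = W' z" using DERIV_unique[OF z(3) der] z at0 by simp
  then have "l \<le> 0" using neg[of z] above[of z] z at0 by simp
  moreover have "b - t0 \<ge> 0" using t0b by simp
  ultimately have "(b - t0) * l \<le> 0" by (simp add: mult_nonneg_nonpos)
  then have "W b \<le> W t0" using z(4) by simp
  moreover have "W t0 \<le> m" using t0T by (simp add: T_def)
  ultimately show False using nb by simp
qed

lemma has_real_derivative_quadratic_form:
  fixes M :: "real^'n^'n"
  assumes sym: "sym_mat M" and e: "(e has_vector_derivative e') (at t within S)"
  shows "((\<lambda>t. e t \<bullet> (M *v e t)) has_real_derivative 2 * (e t \<bullet> (M *v e'))) (at t within S)"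
proof -
  have Me: "((\<lambda>t. M *v e t) has_vector_derivative M *v e') (at t within S)"
    by (rule bounded_linear.has_vector_derivative[OF matrix_vector_mul_bounded_linear e])
  have "((\<lambda>t. e t \<bullet> (M *v e t)) has_vector_derivative e t \<bullet> (M *v e') + e' \<bullet> (M *v e t)) (at t within S)"
    by (rule bounded_bilinear.has_vector_derivative[OF bounded_bilinear_inner e Me])
  moreover have "e' \<bullet> (M *v e t) = e t \<bullet> (M *v e')"
    using sym_mat_inner_commute[OF sym, of "e t" e'] by (simp add: inner_commute)
  ultimately show ?thesis by (simp add: has_real_derivative_iff_has_vector_derivative)
qed

lemma lyapunov_operator_quadratic_form:
  fixes F :: "real^'n^'n"
  assumes "sym_mat M"
  shows "x \<bullet> ((transpose F ** M + M ** F) *v x) = 2 * (x \<bullet> (M *v (F *v x)))"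
proof -
  have "x \<bullet> (transpose F *v (M *v x)) = ((M *v x) v* F) \<bullet> x"
    by (simp add: transpose_matrix_vector inner_commute)
  also have "\<dots> = (M *v x) \<bullet> (F *v x)" by (rule dot_lmul_matrix)
  also have "\<dots> = x \<bullet> (M *v (F *v x))" using assms by (rule sym_mat_inner_commute)
  finally show ?thesis
    by (simp add: matrix_vector_mult_add_rdistrib matrix_vector_mul_assoc[symmetric] inner_add_right)
qed

locale quadratic_lyapunov =
  fixes F M :: "real^'n^'n" and lam :: real
  assumes M: "pos_def M" and lam_pos: "lam > 0"
    and lyap: "loewner_le (transpose F ** M + M ** F) ((-2 * lam) *\<^sub>R M)"
begin

definition gain :: "real^'p^'n \<Rightarrow> real" where
  "gain G = mat_norm (mat_sqrt M ** G) / lam"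

lemma gain_nonneg: "gain G \<ge> 0"
  unfolding gain_def mat_norm_def
  using lam_pos by (intro divide_nonneg_pos onorm_pos_le matrix_vector_mul_bounded_linear)

lemma lyapunov_dissipation: "x \<bullet> (M *v (F *v x)) \<le> - lam * (x \<bullet> (M *v x))"
proof -
  have "2 * (x \<bullet> (M *v (F *v x))) = x \<bullet> ((transpose F ** M + M ** F) *v x)"
    using M by (simp add: pos_def_def lyapunov_operator_quadratic_form)
  also have "\<dots> \<le> x \<bullet> (((-2 * lam) *\<^sub>R M) *v x)"
    using lyap by (simp add: loewner_le_def)
  also have "\<dots> = -2 * lam * (x \<bullet> (M *v x))"
    by (simp only: scaleR_matrix_vector_assoc[symmetric] inner_scaleR_right)
  finally show ?thesis by simp
qed

lemma lyapunov_derivative_bound: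
  "x \<bullet> (M *v (F *v x + G *v w))
     \<le> lam * norm (mat_sqrt M *v x) * (gain G * norm w - norm (mat_sqrt M *v x))"
proof -
  let ?S = "mat_sqrt M"
  have "x \<bullet> (M *v (G *v w)) = (?S *v x) \<bullet> ((?S ** G) *v w)"
    by (simp add: inner_mat_sqrt[OF M] flip: matrix_vector_mul_assoc)
  also have "\<dots> \<le> norm (?S *v x) * norm ((?S ** G) *v w)" by (rule norm_cauchy_schwarz)
  also have "\<dots> \<le> norm (?S *v x) * (lam * gain G * norm w)"
    using lam_pos onorm[OF matrix_vector_mul_bounded_linear, of "?S ** G" w]
    by (intro mult_left_mono) (simp_all add: gain_def mat_norm_def)
  finally have "x \<bullet> (M *v (G *v w)) \<le> lam * norm (?S *v x) * (gain G * norm w)"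
    by (simp add: mult_ac)
  moreover have "x \<bullet> (M *v x) = (norm (?S *v x))\<^sup>2" by (rule quadratic_form_mat_sqrt[OF M])
  ultimately show ?thesis
    using lyapunov_dissipation[of x] by (simp add: matrix_vector_right_distrib inner_add_right
        power2_eq_square algebra_simps)
qed

lemma trajectory_bound:
  assumes "a \<le> b" and cont: "continuous_on {a..b} e"
    and ode: "\<And>t. a < t \<Longrightarrow> t < b \<Longrightarrow> (e has_vector_derivative F *v e t + G *v u t) (at t)"
    and u: "\<And>t. a < t \<Longrightarrow> t < b \<Longrightarrow> norm (u t) \<le> U"
  shows "norm (mat_sqrt M *v e b) \<le> max (norm (mat_sqrt M *v e a)) (gain G * U)"
proof -
  let ?n = "\<lambda>t. norm (mat_sqrt M *v e t)"
  define m where "m = max (?n a) (gain G * U)"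
  have m: "0 \<le> m" unfolding m_def by (rule max.coboundedI1) simp
  have W: "e t \<bullet> (M *v e t) = (?n t)\<^sup>2" for t
    by (rule quadratic_form_mat_sqrt[OF M])
  have "(?n b)\<^sup>2 \<le> m\<^sup>2"
    unfolding W[symmetric]
  proof (rule le_if_deriv_nonpos_above[OF \<open>a \<le> b\<close>])
    show "continuous_on {a..b} (\<lambda>t. e t \<bullet> (M *v e t))"
      by (intro continuous_intros cont linear_continuous_on_compose[OF cont] matrix_vector_mul_linear)
    show "((\<lambda>t. e t \<bullet> (M *v e t)) has_real_derivative 2 * (e t \<bullet> (M *v (F *v e t + G *v u t)))) (at t)"
      if "a < t" "t < b" for t
      using M ode[OF that] by (simp add: pos_def_def has_real_derivative_quadratic_form)
    show "2 * (e t \<bullet> (M *v (F *v e t + G *v u t))) \<le> 0"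
      if t: "a < t" "t < b" and above: "e t \<bullet> (M *v e t) > m\<^sup>2" for t
    proof -
      have "m\<^sup>2 < (?n t)\<^sup>2" using above by (simp add: W)
      then have "m < ?n t" by (rule power_less_imp_less_base) simp
      moreover have "gain G * norm (u t) \<le> m"
        unfolding m_def using u[OF t] by (intro max.coboundedI2 mult_left_mono gain_nonneg)
      ultimately have "lam * ?n t * (gain G * norm (u t) - ?n t) \<le> 0"
        using lam_pos by (simp add: mult_nonneg_nonpos)
      then show ?thesis using lyapunov_derivative_bound[of "e t" G "u t"] by simp
    qed
    show "e a \<bullet> (M *v e a) \<le> m\<^sup>2" using m by (simp add: W m_def power_mono)
  qed
  then show ?thesis using m by (simp add: m_def[symmetric] power2_le_iff_abs_le)
qed

lemma trajectory_bound_right_open: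
  assumes ode: "\<And>t. t \<in> {a..<b} \<Longrightarrow> (e has_vector_derivative F *v e t + G *v u t) (at t within {a..<b})"
    and u: "\<And>t. t \<in> {a..<b} \<Longrightarrow> norm (u t) \<le> U" and t: "t \<in> {a..<b}"
  shows "norm (mat_sqrt M *v e t) \<le> max (norm (mat_sqrt M *v e a)) (gain G * U)"
proof (rule trajectory_bound)
  show "a \<le> t" using t by simp
  show "continuous_on {a..t} e"
    unfolding continuous_on_eq_continuous_within
  proof
    fix s assume s: "s \<in> {a..t}"
    have "continuous (at s within {a..<b}) e"
      using ode[of s] s t by (intro has_vector_derivative_continuous) auto
    then show "continuous (at s within {a..t}) e"
      by (rule continuous_within_subset) (use t in auto)
  qed
  show "(e has_vector_derivative F *v e s + G *v u s) (at s)" if "a < s" "s < t" for s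
  proof -
    have "at s within {a..<b} = at s"
      using that t by (intro at_within_interior) (simp add: interior_atLeastLessThan)
    then show ?thesis using ode[of s] that t by simp
  qed
  show "norm (u s) \<le> U" if "a < s" "s < t" for s
    using u that t by simp
qed

lemma trajectory_bound_after:
  assumes ode: "\<And>t. t > a \<Longrightarrow> (e has_vector_derivative F *v e t + G *v u t) (at t)"
    and u: "\<And>t. t > a \<Longrightarrow> norm (u t) \<le> U" and lim: "(e \<longlongrightarrow> e0) (at_right a)" and "t > a"
  shows "norm (mat_sqrt M *v e t) \<le> max (norm (mat_sqrt M *v e0)) (gain G * U)"
proof (rule tendsto_lowerbound)
  let ?S = "mat_sqrt M"
  show "((\<lambda>s. max (norm (?S *v e s)) (gain G * U)) \<longlongrightarrow> max (norm (?S *v e0)) (gain G * U))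
      (at_right a)"
    by (intro tendsto_max tendsto_norm tendsto_const
        bounded_linear.tendsto[OF matrix_vector_mul_bounded_linear] lim)
  have step: "norm (?S *v e t) \<le> max (norm (?S *v e s)) (gain G * U)" if "a < s" "s < t" for s
  proof (rule trajectory_bound[where u = u])
    show "continuous_on {s..t} e"
      using that by (intro continuous_at_imp_continuous_on ballI has_vector_derivative_continuous[OF ode]) auto
  qed (use that ode u in auto)
  show "\<forall>\<^sub>F s in at_right a. norm (?S *v e t) \<le> max (norm (?S *v e s)) (gain G * U)"
    using eventually_at_right_real[OF \<open>t > a\<close>] by eventually_elim (auto intro: step)
qed simp

lemma impulsive_trajectory_bound:
  assumes "ti > 0"
    and before: "\<And>t. t \<in> {0..<ti} \<Longrightarrow>
      (e has_vector_derivative F *v e t + G *v u t) (at t within {0..<ti})"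
    and after: "\<And>t. t > ti \<Longrightarrow> (e has_vector_derivative F *v e t + G *v u t) (at t)"
    and u: "\<And>t. t \<ge> 0 \<Longrightarrow> norm (u t) \<le> U"
    and left: "(e \<longlongrightarrow> e_left ) (at_left ti)" and right: "(e \<longlongrightarrow> e_left + d) (at_right ti)"
  defines "B \<equiv> max (norm (mat_sqrt M *v e 0)) (gain G * U) + norm (mat_sqrt M *v d)"
  shows "\<forall>t. t \<ge> 0 \<and> t \<noteq> ti \<longrightarrow> norm (mat_sqrt M *v e t) \<le> B"
    and "norm (mat_sqrt M *v e_left) \<le> B" and "norm (mat_sqrt M *v (e_left + d)) \<le> B"
proof -
  let ?S = "mat_sqrt M"
  let ?B0 = "max (norm (?S *v e 0)) (gain G * U)"
  have before_jump: "norm (?S *v e t) \<le> ?B0" if "t \<in> {0..<ti}" for t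
    using before _ that by (rule trajectory_bound_right_open) (use u in auto)
  have "((\<lambda>t. norm (?S *v e t)) \<longlongrightarrow> norm (?S *v e_left)) (at_left ti)"
    by (intro tendsto_norm bounded_linear.tendsto[OF matrix_vector_mul_bounded_linear] left)
  moreover have "\<forall>\<^sub>F t in at_left ti. norm (?S *v e t) \<le> ?B0"
    using eventually_at_left_real[OF \<open>ti > 0\<close>] by eventually_elim (auto intro: before_jump)
  ultimately have left_limit: "norm (?S *v e_left) \<le> ?B0"
    by (rule tendsto_upperbound) simp
  have right_limit: "norm (?S *v (e_left + d)) \<le> B"
    using left_limit norm_triangle_ineq[of "?S *v e_left" "?S *v d"]
    by (simp add: B_def matrix_vector_right_distrib)
  have after_jump: "norm (?S *v e t) \<le> max (norm (?S *v (e_left + d))) (gain G * U)" if "t > ti" for t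
    using after _ right that by (rule trajectory_bound_after) (use u \<open>ti > 0\<close> in auto)
  have B0: "?B0 \<le> B" by (simp add: B_def)
  show "norm (?S *v e_left) \<le> B" using left_limit B0 by (rule order_trans)
  show "norm (?S *v (e_left + d)) \<le> B" by (fact right_limit)
  show "\<forall>t. t \<ge> 0 \<and> t \<noteq> ti \<longrightarrow> norm (?S *v e t) \<le> B"
  proof (intro allI impI)
    fix t assume "t \<ge> 0 \<and> t \<noteq> ti"
    then consider "t \<in> {0..<ti}" | "t > ti" by force
    then show "norm (?S *v e t) \<le> B"
    proof cases
      case 1
      then show ?thesis using before_jump B0 by force
    next
      case 2
      have "max (norm (?S *v (e_left + d))) (gain G * U) \<le> B" using right_limit B0 by simp
      with after_jump[OF 2] show ?thesis by (rule order_trans)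
    qed
  qed
qed

end

section \<open>The tracking error of the cascade\<close>

lemma norm_le_sup_norm:
  assumes "bounded (u ` {0..})" and "t \<ge> 0"
  shows "norm (u t) \<le> sup_norm u"
proof -
  obtain c where "\<forall>x\<in>u ` {0..}. norm x \<le> c" using assms(1) by (auto simp: bounded_iff)
  then have "bdd_above ((\<lambda>t. norm (u t)) ` {0..})" by (intro bdd_aboveI[of _ c]) auto
  then show ?thesis unfolding sup_norm_def using assms(2) by (intro cSUP_upper) auto
qed

lemma norm_le_norm_mat_sqrt:
  assumes M: "pos_def M" and "loewner_le (transpose C ** C) M"
  shows "norm (C *v x) \<le> norm (mat_sqrt M *v x)"
proof -
  have "x \<bullet> ((transpose C ** C) *v x) = ((C *v x) v* C) \<bullet> x"
    by (simp add: inner_commute flip: matrix_vector_mul_assoc)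
  then have "(norm (C *v x))\<^sup>2 = x \<bullet> ((transpose C ** C) *v x)"
    by (simp add: power2_norm_eq_inner dot_lmul_matrix)
  also have "\<dots> \<le> x \<bullet> (M *v x)" using assms(2) by (simp add: loewner_le_def)
  also have "\<dots> = (norm (mat_sqrt M *v x))\<^sup>2" by (rule quadratic_form_mat_sqrt[OF M])
  finally show ?thesis by (simp add: power2_le_iff_abs_le)
qed

lemma norm_output_difference_le:
  assumes "pos_def M" and "loewner_le (transpose C1 ** C1) M" and "C2 = C1 ** P"
  shows "norm (C1 *v a - C2 *v b) \<le> norm (mat_sqrt M *v (a - P *v b))"
  using norm_le_norm_mat_sqrt[OF assms(1,2), of "a - P *v b"] assms(3)
  by (simp add: matrix_vector_mult_diff_distrib flip: matrix_vector_mul_assoc)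

lemma tracking_error_has_vector_derivative:
  fixes A1 :: "real^'n1^'n1" and B1 :: "real^'p1^'n1" and A2 :: "real^'n2^'n2"
    and B2 :: "real^'p2^'n2" and K :: "real^'n1^'p1" and P :: "real^'n2^'n1"
    and Q :: "real^'n2^'p1" and R :: "real^'p2^'p1"
  assumes PQ: "P ** A2 = A1 ** P + B1 ** Q"
    and x1: "(x1 has_vector_derivative
        A1 *v x1 t + B1 *v (R *v u t + Q *v x2 t + K *v (x1 t - P *v x2 t))) (at t within T)"
    and x2: "(x2 has_vector_derivative A2 *v x2 t + B2 *v u t) (at t within T)"
  shows "((\<lambda>t. x1 t - P *v x2 t) has_vector_derivative
      (A1 + B1 ** K) *v (x1 t - P *v x2 t) + (B1 ** R - P ** B2) *v u t) (at t within T)"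
proof -
  have "P *v (A2 *v x2 t) = A1 *v (P *v x2 t) + B1 *v (Q *v x2 t)"
    by (simp add: matrix_vector_mul_assoc PQ matrix_vector_mult_add_rdistrib)
  then have "A1 *v x1 t + B1 *v (R *v u t + Q *v x2 t + K *v (x1 t - P *v x2 t))
      - P *v (A2 *v x2 t + B2 *v u t)
    = (A1 + B1 ** K) *v (x1 t - P *v x2 t) + (B1 ** R - P ** B2) *v u t"
    by (simp add: matrix_vector_right_distrib matrix_vector_mult_diff_distrib
        matrix_vector_mult_add_rdistrib matrix_vector_mult_diff_rdistrib algebra_simps
        flip: matrix_vector_mul_assoc)
  moreover have "((\<lambda>t. x1 t - P *v x2 t) has_vector_derivative
      A1 *v x1 t + B1 *v (R *v u t + Q *v x2 t + K *v (x1 t - P *v x2 t))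
      - P *v (A2 *v x2 t + B2 *v u t)) (at t within T)"
    by (intro has_vector_derivative_diff x1
        bounded_linear.has_vector_derivative[OF matrix_vector_mul_bounded_linear x2])
  ultimately show ?thesis by simp
qed

theorem proposition1:
  fixes A1 :: "real^'n1^'n1" and B1 :: "real^'p1^'n1" and C1 :: "real^'n1^'m"
    and A2 :: "real^'n2^'n2" and B2 :: "real^'p2^'n2" and C2 :: "real^'n2^'m"
    and K :: "real^'n1^'p1" and M :: "real^'n1^'n1" and lam :: real
    and P :: "real^'n2^'n1" and Q :: "real^'n2^'p1" and R :: "real^'p2^'p1"
    and u2 :: "real \<Rightarrow> real^'p2" and x2 :: "real \<Rightarrow> real^'n2"
    and x1 :: "real \<Rightarrow> real^'n1" and Bd :: "real^'n1" and bmax :: real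
    and ti :: real and x1m :: "real^'n1"
  defines "V \<equiv> \<lambda>(a::real^'n1) (b::real^'n2). sqrt ((a - P *v b) \<bullet> (M *v (a - P *v b)))"
    and "uV \<equiv> \<lambda>(w::real^'p2) (a::real^'n1) (b::real^'n2). R *v w + Q *v b + K *v (a - P *v b)"
    and "\<gamma> \<equiv> \<lambda>\<nu>::real. mat_norm (mat_sqrt M ** (B1 ** R - P ** B2)) / lam * \<nu>"
  assumes hurw: "hurwitz (A1 + B1 ** K)"
    and Mpd: "pos_def M" and lam_pos: "lam > 0"
    and MC: "loewner_le (transpose C1 ** C1) M"
    and lyap: "loewner_le (transpose (A1 + B1 ** K) ** M + M ** (A1 + B1 ** K)) ((-2 * lam) *\<^sub>R M)"
    and PQ: "P ** A2 = A1 ** P + B1 ** Q" and CP: "C2 = C1 ** P"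
    and u2_smooth: "smooth_nonneg u2" and u2_bdd: "bounded (u2 ` {0..})"
    and x2_ode: "\<And>t. t \<ge> 0 \<Longrightarrow>
        (x2 has_vector_derivative (A2 *v x2 t + B2 *v u2 t)) (at t within {0..})"
    and ti_pos: "ti > 0" and Bd_bound: "norm Bd < bmax"
    and x1_before: "\<And>t. t \<in> {0..<ti} \<Longrightarrow>
        (x1 has_vector_derivative (A1 *v x1 t + B1 *v uV (u2 t) (x1 t) (x2 t))) (at t within {0..<ti})"
    and x1_after: "\<And>t. t > ti \<Longrightarrow>
        (x1 has_vector_derivative (A1 *v x1 t + B1 *v uV (u2 t) (x1 t) (x2 t))) (at t)"
    and x1_left: "(x1 \<longlongrightarrow> x1m) (at_left ti)"
    and x1_right: "(x1 \<longlongrightarrow> x1m + Bd) (at_right ti)"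
  shows "(\<forall>t. t \<ge> 0 \<and> t \<noteq> ti \<longrightarrow>
            norm (C1 *v x1 t - C2 *v x2 t)
              \<le> max (V (x1 0) (x2 0)) (\<gamma> (sup_norm u2)) + bmax * sqrt (max_eig M))
       \<and> norm (C1 *v x1m - C2 *v x2 ti)
              \<le> max (V (x1 0) (x2 0)) (\<gamma> (sup_norm u2)) + bmax * sqrt (max_eig M)
       \<and> norm (C1 *v (x1m + Bd) - C2 *v x2 ti)
              \<le> max (V (x1 0) (x2 0)) (\<gamma> (sup_norm u2)) + bmax * sqrt (max_eig M)"
proof -
  let ?F = "A1 + B1 ** K" and ?G = "B1 ** R - P ** B2" and ?S = "mat_sqrt M"
  interpret quadratic_lyapunov ?F M lam using Mpd lam_pos lyap by unfold_locales
  define e where "e t = x1 t - P *v x2 t" for t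
  have x2_at: "(x2 has_vector_derivative A2 *v x2 t + B2 *v u2 t) (at t)" if "t > 0" for t
    using x2_ode[of t] that by (simp add: at_within_interior[of t "{0..}"])
  have e_lim: "(e \<longlongrightarrow> l - P *v x2 ti) F" if "(x1 \<longlongrightarrow> l) F" "F \<le> at ti" for l F
    using has_vector_derivative_continuous[OF x2_at[OF ti_pos]] that unfolding e_def isCont_def
    by (intro tendsto_diff bounded_linear.tendsto[OF matrix_vector_mul_bounded_linear]) (auto intro: tendsto_mono)
  have left: "(e \<longlongrightarrow> x1m - P *v x2 ti) (at_left ti)"
    using e_lim[OF x1_left] by (simp add: at_le)
  have right: "(e \<longlongrightarrow> (x1m - P *v x2 ti) + Bd) (at_right ti)"
    using e_lim[OF x1_right] by (simp add: algebra_simps at_le)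
  have before: "(e has_vector_derivative ?F *v e t + ?G *v u2 t) (at t within {0..<ti})"
    if "t \<in> {0..<ti}" for t
    unfolding e_def using that
    by (intro tracking_error_has_vector_derivative[OF PQ] x1_before[unfolded uV_def]
        has_vector_derivative_within_subset[OF x2_ode]) auto
  have after: "(e has_vector_derivative ?F *v e t + ?G *v u2 t) (at t)" if "t > ti" for t
    unfolding e_def using that ti_pos
    by (intro tracking_error_has_vector_derivative[OF PQ] x1_after[unfolded uV_def] x2_at) auto
  have u: "norm (u2 t) \<le> sup_norm u2" if "t \<ge> 0" for t using u2_bdd that by (rule norm_le_sup_norm)
  let ?B = "max (norm (?S *v e 0)) (gain ?G * sup_norm u2) + norm (?S *v Bd)"
  have bounds: "\<forall>t. t \<ge> 0 \<and> t \<noteq> ti \<longrightarrow> norm (?S *v e t) \<le> ?B"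
      "norm (?S *v (x1m - P *v x2 ti)) \<le> ?B" "norm (?S *v (x1m - P *v x2 ti + Bd)) \<le> ?B"
    by (rule impulsive_trajectory_bound[OF ti_pos _ _ _ left right]; fact before after u)+
  have "norm (?S *v Bd) \<le> sqrt (max_eig M) * norm Bd" by (rule norm_mat_sqrt_le[OF Mpd])
  also have "\<dots> \<le> sqrt (max_eig M) * bmax" using Bd_bound max_eig_pos[OF Mpd] by (intro mult_left_mono) auto
  finally have B: "?B \<le> max (V (x1 0) (x2 0)) (\<gamma> (sup_norm u2)) + bmax * sqrt (max_eig M)"
    by (simp add: V_def \<gamma>_def gain_def e_def norm_mat_sqrt[OF Mpd] mult.commute)
  have output_bound: "norm (C1 *v a - C2 *v b) \<le> max (V (x1 0) (x2 0)) (\<gamma> (sup_norm u2)) + bmax * sqrt (max_eig M)"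
    if "norm (?S *v (a - P *v b)) \<le> ?B" for a b
    using norm_output_difference_le[OF Mpd MC CP, of a b] that B by linarith
  have jump: "x1m + Bd - P *v x2 ti = x1m - P *v x2 ti + Bd" by simp
  show ?thesis using bounds by (auto simp: e_def jump intro!: output_bound)
qed

end
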